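(* Let $\mathcal C=\mathcal C(I,A,(\rho_i)_{i\in I},(C^a)_{a\in A})$ be a connected Cartan scheme and $\mathcal R=\mathcal R(\mathcal C,(R^a)_{a\in A})$ a root system of type $\mathcal C$. Let $a\in A$ and $i,j\in I$ with $i\neq j$. The following are equivalent: (1) $c^a_{ij}=c^a_{ji}=-1$; (2) $R^a\cap(\mathbb N_0\alpha_i+\mathbb N_0\alpha_j)=\{\alpha_i,\alpha_i+\alpha_j,\alpha_j\}$; (3) $m^a_{i,j}=3$.
   Context: Let $I$ be a nonempty finite set and $\{\alpha_i\mid i\in I\}$ the standard basis of $\mathbb Z^I$; $\mathbb N_0=\{0,1,2,\dots\}$. A generalized Cartan matrix is $C=(c_{ij})_{i,j\in I}\in\mathbb Z^{I\times I}$ with $c_{ii}=2$, $c_{jk}\le0$ for $j\ne k$, and $c_{ij}=0\Rightarrow c_{ji}=0$. A Cartan scheme $\mathcal C=\mathcal C(I,A,(\rho_i)_{i\in I},(C^a)_{a\in A})$ consists of a nonempty set $A$, maps $\rho_i:A\to A$ and generalized Cartan matrices $C^a=(c^a_{jk})_{j,k\in I}$ such that (C1) $\rho_i^2=\mathrm{id}$ and (C2) $c^a_{ij}=c^{\rho_i(a)}_{ij}$ for all $a\in A$, $i,j\in I$. It is connected if the group generated by the $\rho_i$ acts transitively on $A$. For $i\in I$, $a\in A$ let $\sigma_i^a\in\mathrm{Aut}(\mathbb Z^I)$, $\sigma_i^a(\alpha_j)=\alpha_j-c^a_{ij}\alpha_i$. A root system of type $\mathcal C$ is a family $\mathcal R=\mathcal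 R(\mathcal C,(R^a)_{a\in A})$ of subsets $R^a\subset\mathbb Z^I$ such that, writing $R^a_+=R^a\cap\mathbb N_0^I$ and $m^a_{i,j}=|R^a\cap(\mathbb N_0\alpha_i+\mathbb N_0\alpha_j)|$, for all $a\in A$, $i,j\in I$: (R1) $R^a=R^a_+\cup(-R^a_+)$; (R2) $R^a\cap\mathbb Z\alpha_i=\{\alpha_i,-\alpha_i\}$; (R3) $\sigma_i^a(R^a)=R^{\rho_i(a)}$; (R4) if $i\neq j$ and $m^a_{i,j}$ is finite then $(\rho_i\rho_j)^{m^a_{i,j}}(a)=a$. *)

theory Defs
  imports Main "HOL-Library.Function_Algebras"
begin

text \<open>The index set I is modelled by a finite type 'i (types are nonempty),
 the set A by a type 'a. Elements of Z^I are functions 'i => int.\<close>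

definition alpha :: "'i \<Rightarrow> ('i \<Rightarrow> int)" where
  "alpha i = (\<lambda>j. if j = i then 1 else 0)"

definition gen_cartan_matrix :: "('i \<Rightarrow> 'i \<Rightarrow> int) \<Rightarrow> bool" where
  "gen_cartan_matrix c \<longleftrightarrow>
     (\<forall>i. c i i = 2) \<and> (\<forall>j k. j \<noteq> k \<longrightarrow> c j k \<le> 0) \<and>
     (\<forall>i j. c i j = 0 \<longrightarrow> c j i = 0)"

definition cartan_scheme ::
  "('i \<Rightarrow> 'a \<Rightarrow> 'a) \<Rightarrow> ('a \<Rightarrow> 'i \<Rightarrow> 'i \<Rightarrow> int) \<Rightarrow> bool" where
  "cartan_scheme \<rho> C \<longleftrightarrow>
     (\<forall>a. gen_cartan_matrix (C a)) \<and>
     (\<forall>i. \<rho> i \<circ> \<rho> i = id) \<and>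
     (\<forall>a i j. C a i j = C (\<rho> i a) i j)"

text \<open>Connectedness: the group generated by the involutions rho_i acts transitively;
 since the generators are involutions, the orbit of a is its closure under the rho_i.\<close>
definition connected_cs :: "('i \<Rightarrow> 'a \<Rightarrow> 'a) \<Rightarrow> bool" where
  "connected_cs \<rho> \<longleftrightarrow> (\<forall>a b. (a, b) \<in> {(x, \<rho> i x) | x i. True}\<^sup>*)"

text \<open>sigma_i^a(alpha_j) = alpha_j - c^a_ij alpha_i, extended Z-linearly.\<close>
definition sigma :: "('a \<Rightarrow> 'i \<Rightarrow> 'i \<Rightarrow> int) \<Rightarrow> 'a \<Rightarrow> 'i \<Rightarrow> ('i::finite \<Rightarrow> int) \<Rightarrow> ('i \<Rightarrow> int)" where
  "sigma C a i v = (\<lambda>k. v k - (\<Sum>j\<in>UNIV. C a i j * v j) * alpha i k)"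

definition pos_roots :: "('a \<Rightarrow> ('i \<Rightarrow> int) set) \<Rightarrow> 'a \<Rightarrow> ('i \<Rightarrow> int) set" where
  "pos_roots R a = R a \<inter> {v. \<forall>k. 0 \<le> v k}"

definition roots_ij :: "('a \<Rightarrow> ('i \<Rightarrow> int) set) \<Rightarrow> 'a \<Rightarrow> 'i \<Rightarrow> 'i \<Rightarrow> ('i \<Rightarrow> int) set" where
  "roots_ij R a i j = R a \<inter> {(\<lambda>k. int n * alpha i k + int m * alpha j k) | n m :: nat. True}"

text \<open>m^a_{i,j}; only meaningful (and only used) when the set is finite.\<close>
definition m_ij :: "('a \<Rightarrow> ('i \<Rightarrow> int) set) \<Rightarrow> 'a \<Rightarrow> 'i \<Rightarrow> 'i \<Rightarrow> nat" where
  "m_ij R a i j = card (roots_ij R a i j)"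

definition root_system ::
  "('i::finite \<Rightarrow> 'a \<Rightarrow> 'a) \<Rightarrow> ('a \<Rightarrow> 'i \<Rightarrow> 'i \<Rightarrow> int) \<Rightarrow> ('a \<Rightarrow> ('i \<Rightarrow> int) set) \<Rightarrow> bool" where
  "root_system \<rho> C R \<longleftrightarrow> cartan_scheme \<rho> C \<and>
     (\<forall>a. R a = pos_roots R a \<union> uminus ` pos_roots R a) \<and>
     (\<forall>a i. R a \<inter> {(\<lambda>k. z * alpha i k) | z :: int. True} = {alpha i, - alpha i}) \<and>
     (\<forall>a i. sigma C a i ` R a = R (\<rho> i a)) \<and>
     (\<forall>a i j. i \<noteq> j \<and> finite (roots_ij R a i j) \<longrightarrow>
        ((\<rho> i \<circ> \<rho> j) ^^ m_ij R a i j) a = a)"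

end

theory Submission
  imports Defs
begin

text \<open>Everything happens in the rank-two lattice spanned by \<open>\<alpha>\<^sub>i, \<alpha>\<^sub>j\<close>. For a root
  \<open>x\<alpha>\<^sub>i + y\<alpha>\<^sub>j\<close> with \<open>y > 0\<close> its reflection \<open>(-x - c\<^sub>i\<^sub>j y)\<alpha>\<^sub>i + y\<alpha>\<^sub>j\<close> is again a root with a
  positive coefficient, hence a positive root, so \<open>x \<le> -c\<^sub>i\<^sub>j y\<close>; and reflecting \<open>\<alpha>\<^sub>j\<close> shows that
  \<open>-c\<^sub>i\<^sub>j\<alpha>\<^sub>i + \<alpha>\<^sub>j\<close> and \<open>\<alpha>\<^sub>i - c\<^sub>j\<^sub>i\<alpha>\<^sub>j\<close> are roots. If \<open>c\<^sub>i\<^sub>j = c\<^sub>j\<^sub>i = -1\<close>, the bound forces \<open>x = y\<close> for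
  every root with two positive coefficients, and one reflection maps it to \<open>y\<alpha>\<^sub>j\<close>, so \<open>y = 1\<close>.
  Conversely, a third positive root \<open>\<beta>\<close> makes both Cartan entries negative, so the two
  reflected roots above differ from \<open>\<alpha>\<^sub>i, \<alpha>\<^sub>j\<close>; if there are only three roots, both equal \<open>\<beta>\<close>,
  which forces \<open>c\<^sub>i\<^sub>j = c\<^sub>j\<^sub>i = -1\<close>.\<close>

definition comb2 :: "'i \<Rightarrow> 'i \<Rightarrow> int \<Rightarrow> int \<Rightarrow> 'i \<Rightarrow> int" where
  "comb2 i j x y = (\<lambda>k. x * alpha i k + y * alpha j k)"

lemma comb2_swap: "comb2 i j x y = comb2 j i y x"
  by (auto simp: comb2_def)

lemma comb2_apply:
  assumes "i \<noteq> j"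
  shows "comb2 i j x y i = x" "comb2 i j x y j = y"
  using assms by (auto simp: comb2_def alpha_def)

lemma comb2_eq_iff: "i \<noteq> j \<Longrightarrow> comb2 i j x y = comb2 i j x' y' \<longleftrightarrow> x = x' \<and> y = y'"
  by (metis comb2_apply)

lemma alpha_eq_comb2:
  "alpha i = comb2 i j 1 0" "alpha j = comb2 i j 0 1" "alpha i + alpha j = comb2 i j 1 1"
  by (auto simp: comb2_def)

lemma comb2_left_eq_scaled_alpha: "comb2 i j x 0 = (\<lambda>k. x * alpha i k)"
  by (simp add: comb2_def)

lemma sum_times_comb2:
  fixes f :: "'i::finite \<Rightarrow> int"
  assumes "i \<noteq> j"
  shows "(\<Sum>k\<in>UNIV. f k * comb2 i j x y k) = f i * x + f j * y"
proof -
  have "(\<Sum>k\<in>UNIV. f k * comb2 i j x y k) =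
        (\<Sum>k\<in>UNIV. if k = i then f k * x else 0) + (\<Sum>k\<in>UNIV. if k = j then f k * y else 0)"
    unfolding sum.distrib[symmetric]
    by (rule sum.cong) (auto simp: comb2_def alpha_def assms)
  then show ?thesis by simp
qed

lemma sigma_comb2:
  fixes C :: "'a \<Rightarrow> 'i::finite \<Rightarrow> 'i \<Rightarrow> int"
  assumes "i \<noteq> j"
  shows "sigma C a i (comb2 i j x y) = comb2 i j (x - (C a i i * x + C a i j * y)) y"
  unfolding sigma_def sum_times_comb2[OF assms]
  by (auto simp: comb2_def alpha_def assms algebra_simps)

lemma roots_ij_eq: "roots_ij R a i j = R a \<inter> {comb2 i j x y | x y. 0 \<le> x \<and> 0 \<le> y}"
proof -
  have "{(\<lambda>k. int n * alpha i k + int m * alpha j k) | n m :: nat. True}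
        = {comb2 i j x y | x y. 0 \<le> x \<and> 0 \<le> y}"
  proof (intro equalityI subsetI)
    fix v assume "v \<in> {(\<lambda>k. int n * alpha i k + int m * alpha j k) | n m :: nat. True}"
    then obtain n m :: nat where "v = comb2 i j (int n) (int m)"
      by (auto simp: comb2_def)
    then show "v \<in> {comb2 i j x y | x y. 0 \<le> x \<and> 0 \<le> y}"
      using of_nat_0_le_iff by blast
  next
    fix v assume "v \<in> {comb2 i j x y | x y. 0 \<le> x \<and> 0 \<le> y}"
    then obtain x y where "v = comb2 i j x y" "0 \<le> x" "0 \<le> y" by blast
    then have "v = (\<lambda>k. int (nat x) * alpha i k + int (nat y) * alpha j k)"
      by (simp add: comb2_def)
    then show "v \<in> {(\<lambda>k. int n * alpha i k + int m * alpha j k) | n m :: nat. True}" by blast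
  qed
  then show ?thesis unfolding roots_ij_def by simp
qed

lemma comb2_in_roots_ij_iff:
  "0 \<le> x \<Longrightarrow> 0 \<le> y \<Longrightarrow> comb2 i j x y \<in> roots_ij R a i j \<longleftrightarrow> comb2 i j x y \<in> R a"
  unfolding roots_ij_eq by blast

lemma roots_ijE:
  assumes "v \<in> roots_ij R a i j"
  obtains x y where "v = comb2 i j x y" "0 \<le> x" "0 \<le> y" "comb2 i j x y \<in> R a"
  using assms unfolding roots_ij_eq by blast

lemma card_simply_laced_roots:
  "i \<noteq> j \<Longrightarrow> card {comb2 i j 1 0, comb2 i j 1 1, comb2 i j 0 1} = 3"
  by (simp add: comb2_eq_iff)

context
  fixes \<rho> :: "'i::finite \<Rightarrow> 'a \<Rightarrow> 'a"
    and C :: "'a \<Rightarrow> 'i \<Rightarrow> 'i \<Rightarrow> int"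
    and R :: "'a \<Rightarrow> ('i \<Rightarrow> int) set"
  assumes rs: "root_system \<rho> C R"
begin

lemma cartan_scheme: "cartan_scheme \<rho> C"
  using rs unfolding root_system_def by (elim conjE)

lemma gen_cartan_matrix: "gen_cartan_matrix (C a)"
  using cartan_scheme unfolding cartan_scheme_def by (elim conjE) (erule spec)

lemma cartan_diag: "C a i i = 2"
  using gen_cartan_matrix[of a] unfolding gen_cartan_matrix_def by blast

lemma cartan_offdiag_nonpos: "i \<noteq> j \<Longrightarrow> C a i j \<le> 0"
  using gen_cartan_matrix unfolding gen_cartan_matrix_def by blast

lemma rho_rho: "\<rho> i (\<rho> i a) = a"
proof -
  have "\<rho> i \<circ> \<rho> i = id"
    using cartan_scheme unfolding cartan_scheme_def by (elim conjE) (erule spec)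
  then show ?thesis by (metis comp_apply id_apply)
qed

lemma cartan_rho: "C (\<rho> i a) i j = C a i j"
proof -
  have "\<forall>a i j. C a i j = C (\<rho> i a) i j"
    using cartan_scheme unfolding cartan_scheme_def by (elim conjE)
  then show ?thesis by metis
qed

lemma sigma_in_roots:
  assumes "v \<in> R b"
  shows "sigma C b i v \<in> R (\<rho> i b)"
proof -
  have "\<forall>a i. sigma C a i ` R a = R (\<rho> i a)"
    using rs unfolding root_system_def by (elim conjE)
  with assms show ?thesis by blast
qed

lemma root_nonneg_if_pos_coeff:
  assumes "v \<in> R b" "0 < v k"
  shows "0 \<le> v k'"
proof -
  have "\<forall>a. R a = pos_roots R a \<union> uminus ` pos_roots R a"
    using rs unfolding root_system_def by (elim conjE)
  then have "R b = pos_roots R b \<union> uminus ` pos_roots R b" ..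
  with assms(1) have "v \<in> pos_roots R b \<or> - v \<in> pos_roots R b" by auto
  then show ?thesis
  proof
    assume "v \<in> pos_roots R b"
    then show ?thesis unfolding pos_roots_def by blast
  next
    assume "- v \<in> pos_roots R b"
    then have "0 \<le> - v k" unfolding pos_roots_def by auto
    with assms(2) show ?thesis by simp
  qed
qed

lemma roots_on_line: "R b \<inter> {(\<lambda>k. z * alpha i k) | z. True} = {alpha i, - alpha i}"
proof -
  have "\<forall>a i. R a \<inter> {(\<lambda>k. z * alpha i k) | z. True} = {alpha i, - alpha i}"
    using rs unfolding root_system_def by (elim conjE)
  then show ?thesis by blast
qed

lemma alpha_in_roots: "alpha i \<in> R b"
  using roots_on_line by blast

lemma scaled_alpha_in_roots:
  assumes "(\<lambda>k. z * alpha i k) \<in> R b"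
  shows "z = 1 \<or> z = -1"
proof -
  have "(\<lambda>k. z * alpha i k) \<in> {alpha i, - alpha i}"
    using assms roots_on_line by blast
  then have "z * alpha i i = alpha i i \<or> z * alpha i i = - alpha i i"
    by (auto dest: fun_cong[where x = i])
  then show ?thesis by (simp add: alpha_def)
qed

lemma comb2_left_in_roots: "comb2 i j x 0 \<in> R b \<Longrightarrow> x = 1 \<or> x = -1"
  by (simp add: comb2_left_eq_scaled_alpha scaled_alpha_in_roots)

lemma comb2_right_in_roots: "comb2 i j 0 y \<in> R b \<Longrightarrow> y = 1 \<or> y = -1"
  by (simp add: comb2_swap[of i j] comb2_left_in_roots)

lemma sigma_comb2_in_roots:
  "i \<noteq> j \<Longrightarrow> comb2 i j x y \<in> R a \<Longrightarrow> comb2 i j (- x - C a i j * y) y \<in> R (\<rho> i a)"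
  using sigma_in_roots[of "comb2 i j x y" a i] by (simp add: sigma_comb2 cartan_diag)

lemma root_coeff_bound:
  assumes "i \<noteq> j" "comb2 i j x y \<in> R a" "0 < y"
  shows "x + C a i j * y \<le> 0"
  using root_nonneg_if_pos_coeff[OF sigma_comb2_in_roots[OF assms(1,2)], of j i] assms
  by (simp add: comb2_apply)

lemma root_coeff_bound':
  assumes "i \<noteq> j" "comb2 i j x y \<in> R a" "0 < x"
  shows "y + C a j i * x \<le> 0"
  using root_coeff_bound[of j i y x a] assms by (simp add: comb2_swap[of i j])

lemma reflected_alpha_in_roots:
  assumes "i \<noteq> j"
  shows "comb2 i j (- C a i j) 1 \<in> R a"
proof -
  have "comb2 i j 0 1 \<in> R (\<rho> i a)"
    using alpha_in_roots by (simp add: alpha_eq_comb2[symmetric])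
  from sigma_comb2_in_roots[OF assms this] show ?thesis
    by (simp add: rho_rho cartan_rho)
qed

lemma reflected_alpha_in_roots':
  assumes "i \<noteq> j"
  shows "comb2 i j 1 (- C a j i) \<in> R a"
  using reflected_alpha_in_roots[of j i a] assms by (simp add: comb2_swap[of j i])

lemma simple_roots_in_roots_ij: "comb2 i j 1 0 \<in> roots_ij R a i j" "comb2 i j 0 1 \<in> roots_ij R a i j"
  using alpha_in_roots[of i a] alpha_in_roots[of j a]
  by (simp_all add: comb2_in_roots_ij_iff alpha_eq_comb2[where i = i and j = j])

lemma reflected_alphas_in_roots_ij:
  assumes "i \<noteq> j"
  shows "comb2 i j (- C a i j) 1 \<in> roots_ij R a i j" "comb2 i j 1 (- C a j i) \<in> roots_ij R a i j"
  using assms reflected_alpha_in_roots reflected_alpha_in_roots' cartan_offdiag_nonpos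
  by (simp_all add: comb2_in_roots_ij_iff)

lemma roots_ij_if_simply_laced:
  assumes ij: "i \<noteq> j" and c: "C a i j = -1" "C a j i = -1"
  shows "roots_ij R a i j = {comb2 i j 1 0, comb2 i j 1 1, comb2 i j 0 1}"
proof (intro equalityI subsetI)
  fix v assume "v \<in> roots_ij R a i j"
  then obtain x y where v: "v = comb2 i j x y" "0 \<le> x" "0 \<le> y" and root: "comb2 i j x y \<in> R a"
    by (rule roots_ijE)
  consider "y = 0" | "x = 0" | "0 < x" "0 < y"
    using v(2,3) by linarith
  then show "v \<in> {comb2 i j 1 0, comb2 i j 1 1, comb2 i j 0 1}"
  proof cases
    case 1 then show ?thesis using comb2_left_in_roots[of i j x a] root v by auto
  next
    case 2 then show ?thesis using comb2_right_in_roots[of i j y a] root v by auto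
  next
    case 3
    then have "x = y"
      using root_coeff_bound[OF ij root] root_coeff_bound'[OF ij root] c by simp
    then have "comb2 i j 0 y \<in> R (\<rho> i a)"
      using sigma_comb2_in_roots[OF ij root] c by simp
    then have "y = 1" using comb2_right_in_roots v(3) by fastforce
    then show ?thesis using v \<open>x = y\<close> by simp
  qed
next
  fix v assume "v \<in> {comb2 i j 1 0, comb2 i j 1 1, comb2 i j 0 1}"
  moreover have "comb2 i j 1 1 \<in> roots_ij R a i j"
    using reflected_alphas_in_roots_ij(1)[OF ij, of a] c by simp
  ultimately show "v \<in> roots_ij R a i j"
    using simple_roots_in_roots_ij by auto
qed

lemma simply_laced_if_roots_ij:
  assumes ij: "i \<noteq> j"
    and roots: "roots_ij R a i j = {comb2 i j 1 0, comb2 i j 1 1, comb2 i j 0 1}"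
  shows "C a i j = -1 \<and> C a j i = -1"
proof -
  have "comb2 i j 1 1 \<in> R a" using roots unfolding roots_ij_eq by blast
  then have "C a i j \<le> -1" "C a j i \<le> -1"
    using root_coeff_bound[OF ij] root_coeff_bound'[OF ij] by fastforce+
  moreover have "- C a i j \<in> {0, 1}" "- C a j i \<in> {0, 1}"
    using reflected_alphas_in_roots_ij[OF ij, of a] unfolding roots
    by (auto simp: comb2_eq_iff[OF ij])
  ultimately show ?thesis by auto
qed

lemma simply_laced_if_card_roots_ij:
  assumes ij: "i \<noteq> j" and card: "m_ij R a i j = 3"
  shows "C a i j = -1 \<and> C a j i = -1"
proof -
  let ?S = "roots_ij R a i j" and ?simple = "{comb2 i j 1 0, comb2 i j 0 1}"
  have "finite ?S" using card unfolding m_ij_def by (metis card.infinite zero_neq_numeral)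
  then have "card (?S - ?simple) = 1"
    using card simple_roots_in_roots_ij unfolding m_ij_def
    by (simp add: card_Diff_subset comb2_eq_iff[OF ij])
  then obtain \<beta> where \<beta>: "?S - ?simple = {\<beta>}" by (rule card_1_singletonE)
  then have \<beta>_root: "\<beta> \<in> ?S" and "\<beta> \<notin> ?simple" by auto
  obtain x y where xy: "\<beta> = comb2 i j x y" "0 \<le> x" "0 \<le> y" and root: "comb2 i j x y \<in> R a"
    using \<beta>_root by (rule roots_ijE)
  have "y \<noteq> 0"
    using comb2_left_in_roots[of i j x a] root xy \<open>\<beta> \<notin> ?simple\<close> by auto
  moreover have "x \<noteq> 0"
    using comb2_right_in_roots[of i j y a] root xy \<open>\<beta> \<notin> ?simple\<close> by auto
  ultimately have "0 < x" "0 < y" using xy by auto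
  then have "C a i j * y < 0" "C a j i * x < 0"
    using root_coeff_bound[OF ij root] root_coeff_bound'[OF ij root] by linarith+
  then have "C a i j < 0" "C a j i < 0"
    using \<open>0 < x\<close> \<open>0 < y\<close> by (simp_all add: mult_less_0_iff)
  then have "comb2 i j (- C a i j) 1 \<in> ?S - ?simple" "comb2 i j 1 (- C a j i) \<in> ?S - ?simple"
    using reflected_alphas_in_roots_ij[OF ij] by (auto simp: comb2_eq_iff[OF ij])
  then have "comb2 i j (- C a i j) 1 = comb2 i j 1 (- C a j i)"
    unfolding \<beta> by simp
  then show ?thesis by (simp add: comb2_eq_iff[OF ij])
qed

end

theorem lemma4p8:
  fixes \<rho> :: "'i::finite \<Rightarrow> 'a \<Rightarrow> 'a"
    and C :: "'a \<Rightarrow> 'i \<Rightarrow> 'i \<Rightarrow> int"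
    and R :: "'a \<Rightarrow> ('i \<Rightarrow> int) set"
  assumes "cartan_scheme \<rho> C"
    and "connected_cs \<rho>"
    and "root_system \<rho> C R"
    and "i \<noteq> j"
  shows "(C a i j = -1 \<and> C a j i = -1 \<longleftrightarrow>
            roots_ij R a i j = {alpha i, alpha i + alpha j, alpha j})
       \<and> (roots_ij R a i j = {alpha i, alpha i + alpha j, alpha j} \<longleftrightarrow>
            m_ij R a i j = 3)"
proof -
  note rs = assms(3) and ij = assms(4)
  let ?simply_laced = "C a i j = -1 \<and> C a j i = -1"
    and ?roots = "{comb2 i j 1 0, comb2 i j 1 1, comb2 i j 0 1}"
  have "{alpha i, alpha i + alpha j, alpha j} = ?roots"
    by (subst alpha_eq_comb2(3)[where i = i and j = j]) (simp only: alpha_eq_comb2[where i = i and j = j])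
  moreover have "?simply_laced \<longleftrightarrow> roots_ij R a i j = ?roots"
    using roots_ij_if_simply_laced[OF rs ij] simply_laced_if_roots_ij[OF rs ij] by blast
  moreover have "roots_ij R a i j = ?roots \<longleftrightarrow> m_ij R a i j = 3"
  proof
    assume "roots_ij R a i j = ?roots"
    then show "m_ij R a i j = 3" unfolding m_ij_def by (simp only: card_simply_laced_roots[OF ij])
  next
    assume "m_ij R a i j = 3"
    then show "roots_ij R a i j = ?roots"
      using simply_laced_if_card_roots_ij[OF rs ij] roots_ij_if_simply_laced[OF rs ij] by blast
  qed
  ultimately show ?thesis by simp
qed

end
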